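(* Let $\Sigma$ be a finite alphabet. A language $L \subseteq \Sigma^*$ belongs to $\mathsf{F}(\mathcal{O}(1))$ if and only if there exists $k \ge 0$ such that $L_n = \{w\in\Sigma^* : \mathrm{last}_n(w)\in L\}$ is $k$-suffix testable for all $n \ge 0$.
   Context: Fix $a\in\Sigma$; $\mathrm{last}_n(a_1\cdots a_m)=a_{m-n+1}\cdots a_m$ if $n\le m$, else $a^{n-m}a_1\cdots a_m$. A fixed-size sliding window algorithm for $L$ is a sequence $(\mathcal{A}_n)_{n\ge0}$ of deterministic (possibly infinite-state) automata with injective encodings of their states into bit strings, $\mathcal{A}_n$ accepting $L_n$; its space complexity at $n$ is the maximal encoding length of a state of $\mathcal{A}_n$. $\mathsf{F}(\mathcal{O}(1))$ is the class of languages having such an algorithm of constant space complexity. $K$ is $k$-suffix testable if for all $x,y\in\Sigma^*$ and $z\in\Sigma^k$: $xz\in K\iff yz\in K$. *)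

theory Defs
  imports Main
begin

text \<open>The alphabet Sigma is the (finite) type 'a; the padding letter a is a parameter.\<close>

definition last_n :: "'a \<Rightarrow> nat \<Rightarrow> 'a list \<Rightarrow> 'a list" where
  "last_n a n w = (if n \<le> length w then drop (length w - n) w
                   else replicate (n - length w) a @ w)"

definition window_lang :: "'a \<Rightarrow> 'a list set \<Rightarrow> nat \<Rightarrow> 'a list set" where
  "window_lang a L n = {w. last_n a n w \<in> L}"

definition suffix_testable :: "nat \<Rightarrow> 'a list set \<Rightarrow> bool" where
  "suffix_testable k K \<longleftrightarrow>
     (\<forall>x y z. length z = k \<longrightarrow> (x @ z \<in> K \<longleftrightarrow> y @ z \<in> K))"

record ('q, 'a) enc_dfa =
  states :: "'q set"
  init   :: 'q
  delta  :: "'q \<Rightarrow> 'a \<Rightarrow> 'q"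
  final  :: "'q set"
  enc    :: "'q \<Rightarrow> bool list"

definition wf_enc_dfa :: "('q, 'a) enc_dfa \<Rightarrow> bool" where
  "wf_enc_dfa A \<longleftrightarrow> init A \<in> states A
     \<and> (\<forall>q\<in>states A. \<forall>x. delta A q x \<in> states A)
     \<and> final A \<subseteq> states A
     \<and> inj_on (enc A) (states A)"

definition dfa_lang :: "('q, 'a) enc_dfa \<Rightarrow> 'a list set" where
  "dfa_lang A = {w. foldl (delta A) (init A) w \<in> final A}"

text \<open>Space complexity at n is sup of encoding lengths; "bounded by c" means every
  state encoding has length at most c.\<close>
definition space_le :: "('q, 'a) enc_dfa \<Rightarrow> nat \<Rightarrow> bool" where
  "space_le A c \<longleftrightarrow> (\<forall>q\<in>states A. length (enc A q) \<le> c)"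

definition sliding_window_alg :: "'a \<Rightarrow> 'a list set \<Rightarrow> (nat \<Rightarrow> ('q, 'a) enc_dfa) \<Rightarrow> bool" where
  "sliding_window_alg a L As \<longleftrightarrow>
     (\<forall>n. wf_enc_dfa (As n) \<and> dfa_lang (As n) = window_lang a L n)"

text \<open>States are taken from nat, which
  is no restriction since an injective encoding into bit strings forces countability.\<close>
definition F_O1 :: "'a \<Rightarrow> 'a list set \<Rightarrow> bool" where
  "F_O1 a L \<longleftrightarrow> (\<exists>As :: nat \<Rightarrow> (nat, 'a) enc_dfa. sliding_window_alg a L As
       \<and> (\<exists>c N. \<forall>n\<ge>N. space_le (As n) c))"

end

theory Submission
  imports Defs "HOL-Library.Countable"
begin

text \<open>Every window language \<open>L\<^sub>n\<close> is \<open>n\<close>-suffix testable. If \<open>L\<^sub>n\<close> is accepted by a DFA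
  with at most \<open>Q\<close> states, then for any two words \<open>x, y\<close> and any \<open>z\<close> with \<open>|z| \<ge> Q\<^sup>2\<close> the
  pair of runs from \<open>x\<close> and \<open>y\<close> repeats a pair of states while reading \<open>z\<close>; pumping this
  common loop makes \<open>z\<close> longer than \<open>n\<close> without changing acceptance, so \<open>L\<^sub>n\<close> is even
  \<open>Q\<^sup>2\<close>-suffix testable. Constant space bounds \<open>Q\<close> uniformly for large \<open>n\<close>.
  Conversely, if every \<open>L\<^sub>n\<close> is \<open>k\<close>-suffix testable, the automaton storing the last \<open>k\<close>
  letters (padded with \<open>a\<close>) accepts \<open>L\<^sub>n\<close> with a number of states independent of \<open>n\<close>.\<close>

lemma length_last_n [simp]: "length (last_n a n w) = n"
  by (simp add: last_n_def)

lemma last_n_append_of_le_length: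
  "n \<le> length z \<Longrightarrow> last_n a n (x @ z) = last_n a n z"
  by (simp add: last_n_def)

lemma last_n_replicate_append: "last_n a n (replicate m a @ w) = last_n a n w"
  by (auto simp: last_n_def replicate_add[symmetric] drop_append)

lemma last_n_eq_drop: "last_n a n w = drop (length w) (replicate n a @ w)"
  by (auto simp: last_n_def drop_append)

lemma last_n_last_n_snoc: "last_n a n (last_n a n w @ [x]) = last_n a n (w @ [x])"
proof (cases "n \<le> length w")
  case True
  then show ?thesis by (auto simp: last_n_def Suc_diff_le)
next
  case False
  then show ?thesis
    by (cases "n = Suc (length w)") (auto simp: last_n_def drop_append Suc_diff_le)
qed

lemma suffix_testable_append_of_le_length:
  assumes "suffix_testable m K" and "m \<le> length z"
  shows "x @ z \<in> K \<longleftrightarrow> y @ z \<in> K"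
proof -
  obtain z\<^sub>1 z\<^sub>2 where "z = z\<^sub>1 @ z\<^sub>2" and "length z\<^sub>2 = m"
    using assms(2) by (metis append_take_drop_id diff_diff_cancel length_drop)
  then show ?thesis
    using assms(1) unfolding suffix_testable_def by (metis append.assoc)
qed

lemma suffix_testable_mono: "suffix_testable m K \<Longrightarrow> m \<le> k \<Longrightarrow> suffix_testable k K"
  using suffix_testable_append_of_le_length unfolding suffix_testable_def by metis

lemma suffix_testable_window_lang: "suffix_testable n (window_lang a L n)"
  by (simp add: suffix_testable_def window_lang_def last_n_append_of_le_length)

lemma window_lang_iff_last_n:
  assumes "suffix_testable k (window_lang a L n)"
  shows "w \<in> window_lang a L n \<longleftrightarrow> last_n a k w \<in> window_lang a L n"
proof -
  have split: "replicate k a @ w = take (length w) (replicate k a @ w) @ last_n a k w"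
    unfolding last_n_eq_drop by (rule append_take_drop_id[symmetric])
  have "w \<in> window_lang a L n \<longleftrightarrow> replicate k a @ w \<in> window_lang a L n"
    by (simp add: window_lang_def last_n_replicate_append)
  also have "\<dots> \<longleftrightarrow> [] @ last_n a k w \<in> window_lang a L n"
    using assms unfolding suffix_testable_def by (subst split) (meson length_last_n)
  finally show ?thesis by simp
qed

lemma foldl_in_states:
  "wf_enc_dfa A \<Longrightarrow> p \<in> states A \<Longrightarrow> foldl (delta A) p w \<in> states A"
  by (induction w arbitrary: p) (auto simp: wf_enc_dfa_def)

lemma foldl_concat_replicate_loop:
  "foldl d s v = s \<Longrightarrow> foldl d s (concat (replicate t v)) = s"
  by (induction t) auto

lemma foldl_pump:
  assumes "foldl d (foldl d p u) v = foldl d p u"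
  shows "foldl d p (u @ concat (replicate t v) @ w) = foldl d p (u @ v @ w)"
  using assms foldl_concat_replicate_loop[OF assms] by simp

lemma common_loop_of_card_le:
  assumes wf: "wf_enc_dfa A" and fin: "finite (states A)"
    and p: "p \<in> states A" and q: "q \<in> states A"
    and len: "card (states A) ^ 2 \<le> length z"
  obtains u v w where "z = u @ v @ w" and "v \<noteq> []"
    and "foldl (delta A) (foldl (delta A) p u) v = foldl (delta A) p u"
    and "foldl (delta A) (foldl (delta A) q u) v = foldl (delta A) q u"
proof -
  let ?d = "delta A"
  define f where "f i = (foldl ?d p (take i z), foldl ?d q (take i z))" for i
  have "f ` {0..length z} \<subseteq> states A \<times> states A"
    using foldl_in_states[OF wf] p q by (auto simp: f_def)
  moreover have "card (states A \<times> states A) < card {0..length z}"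
    using len by (simp add: card_cartesian_product power2_eq_square)
  ultimately have "\<not> inj_on f {0..length z}"
    using card_inj_on_le fin by (meson finite_SigmaI leD)
  then obtain i j where ij: "i < j" "j \<le> length z" and "f i = f j"
    unfolding inj_on_def by (metis atLeastAtMost_iff linorder_neqE_nat)
  define u where "u = take i z"
  define v where "v = drop i (take j z)"
  have prefix: "take j z = u @ v"
    unfolding u_def v_def using ij by (metis append_take_drop_id min.absorb1 less_imp_le take_take)
  show thesis
  proof
    show "z = u @ v @ drop j z"
      using prefix by (metis append.assoc append_take_drop_id)
    show "v \<noteq> []"
      using ij by (simp add: v_def)
    show "foldl ?d (foldl ?d p u) v = foldl ?d p u" "foldl ?d (foldl ?d q u) v = foldl ?d q u"
      using \<open>f i = f j\<close> prefix by (auto simp: f_def u_def[symmetric])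
  qed
qed

lemma suffix_testable_dfa_lang_card:
  fixes A :: "('q, 'a) enc_dfa"
  assumes wf: "wf_enc_dfa A" and fin: "finite (states A)"
    and testable: "suffix_testable m (dfa_lang A)" and card: "card (states A) ^ 2 \<le> k"
  shows "suffix_testable k (dfa_lang A)"
  unfolding suffix_testable_def
proof (intro allI impI)
  fix x y z :: "'a list"
  assume "length z = k"
  let ?d = "delta A"
  define p where "p = foldl ?d (init A) x"
  define q where "q = foldl ?d (init A) y"
  have "p \<in> states A" "q \<in> states A"
    using foldl_in_states[OF wf] wf unfolding p_def q_def wf_enc_dfa_def by auto
  then obtain u v w where z: "z = u @ v @ w" and "v \<noteq> []"
    and loop_p: "foldl ?d (foldl ?d p u) v = foldl ?d p u"
    and loop_q: "foldl ?d (foldl ?d q u) v = foldl ?d q u"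
    using common_loop_of_card_le[OF wf fin] card \<open>length z = k\<close> by metis
  define Z where "Z = u @ concat (replicate m v) @ w"
  have "m \<le> m * length v"
    using \<open>v \<noteq> []\<close> by (cases v) auto
  moreover have "length Z = length u + m * length v + length w"
    by (simp add: Z_def length_concat sum_list_replicate)
  ultimately have long: "m \<le> length Z"
    by linarith
  have accept: "s @ r \<in> dfa_lang A \<longleftrightarrow> foldl ?d (foldl ?d (init A) s) r \<in> final A" for s r
    by (simp add: dfa_lang_def)
  have "x @ z \<in> dfa_lang A \<longleftrightarrow> x @ Z \<in> dfa_lang A"
    unfolding accept p_def[symmetric] z Z_def foldl_pump[OF loop_p] ..
  also have "\<dots> \<longleftrightarrow> y @ Z \<in> dfa_lang A"
    using suffix_testable_append_of_le_length[OF testable long] .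
  also have "\<dots> \<longleftrightarrow> y @ z \<in> dfa_lang A"
    unfolding accept q_def[symmetric] z Z_def foldl_pump[OF loop_q] ..
  finally show "x @ z \<in> dfa_lang A \<longleftrightarrow> y @ z \<in> dfa_lang A" .
qed

lemma states_finite_card_le_if_space_le:
  assumes "wf_enc_dfa A" and "space_le A c"
  shows "finite (states A)" and "card (states A) \<le> card {xs :: bool list. length xs \<le> c}"
proof -
  have inj: "inj_on (enc A) (states A)"
    using assms(1) by (simp add: wf_enc_dfa_def)
  have sub: "enc A ` states A \<subseteq> {xs. length xs \<le> c}"
    using assms(2) by (auto simp: space_le_def)
  have fin: "finite {xs :: bool list. length xs \<le> c}"
    using finite_lists_length_le[of "UNIV :: bool set" c] by simp
  show "finite (states A)"
    using finite_imageD[OF finite_subset[OF sub fin] inj] .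
  show "card (states A) \<le> card {xs :: bool list. length xs \<le> c}"
    using card_inj_on_le[OF inj sub fin] .
qed

lemma suffix_testable_if_F_O1:
  assumes "F_O1 a L"
  shows "\<exists>k. \<forall>n. suffix_testable k (window_lang a L n)"
proof -
  obtain As :: "nat \<Rightarrow> (nat, 'a) enc_dfa" and c N
    where alg: "sliding_window_alg a L As" and space: "\<forall>n\<ge>N. space_le (As n) c"
    using assms unfolding F_O1_def by blast
  define B where "B = card {xs :: bool list. length xs \<le> c}"
  have "suffix_testable (N + B ^ 2) (window_lang a L n)" for n
  proof (cases "n < N")
    case True
    then show ?thesis
      by (intro suffix_testable_mono[OF suffix_testable_window_lang]) simp
  next
    case False
    have wf: "wf_enc_dfa (As n)" and lang: "dfa_lang (As n) = window_lang a L n"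
      using alg unfolding sliding_window_alg_def by auto
    have "space_le (As n) c"
      using space False by simp
    note states = states_finite_card_le_if_space_le[OF wf this]
    have "card (states (As n)) ^ 2 \<le> N + B ^ 2"
      using states(2) False unfolding B_def by (simp add: power_mono trans_le_add2)
    moreover have "suffix_testable n (dfa_lang (As n))"
      by (simp add: lang suffix_testable_window_lang)
    ultimately have "suffix_testable (N + B ^ 2) (dfa_lang (As n))"
      using suffix_testable_dfa_lang_card[OF wf states(1)] by blast
    then show ?thesis
      by (simp add: lang)
  qed
  then show ?thesis by blast
qed

definition last_n_dfa :: "'a::countable \<Rightarrow> nat \<Rightarrow> 'a list set \<Rightarrow> (nat, 'a) enc_dfa" where
  "last_n_dfa a k K =
     \<lparr> states = to_nat ` {w :: 'a list. length w = k},
       init = to_nat (replicate k a),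
       delta = (\<lambda>q x. to_nat (last_n a k (from_nat q @ [x]))),
       final = to_nat ` {w. length w = k \<and> w \<in> K},
       enc = (\<lambda>q. replicate q True) \<rparr>"

lemma foldl_last_n_dfa:
  "foldl (delta (last_n_dfa a k K)) (init (last_n_dfa a k K)) w = to_nat (last_n a k w)"
proof (induction w rule: rev_induct)
  case Nil
  then show ?case by (simp add: last_n_dfa_def last_n_def)
next
  case (snoc x w)
  then show ?case by (simp add: last_n_dfa_def last_n_last_n_snoc)
qed

lemma wf_last_n_dfa: "wf_enc_dfa (last_n_dfa a k K)"
  by (auto simp: wf_enc_dfa_def last_n_dfa_def inj_on_def)

lemma dfa_lang_last_n_dfa: "dfa_lang (last_n_dfa a k K) = {w. last_n a k w \<in> K}"
  unfolding dfa_lang_def foldl_last_n_dfa by (auto simp: last_n_dfa_def)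

lemma space_le_last_n_dfa:
  fixes a :: "'a::finite"
  shows "space_le (last_n_dfa a k K) (Max (to_nat ` {w :: 'a list. length w = k}))"
proof -
  have "finite {w :: 'a list. length w = k}"
    using finite_lists_length_eq[of "UNIV :: 'a set" k] by simp
  then show ?thesis by (simp add: space_le_def last_n_dfa_def)
qed

lemma F_O1_if_suffix_testable:
  fixes a :: "'a::finite"
  assumes "\<forall>n. suffix_testable k (window_lang a L n)"
  shows "F_O1 a L"
proof -
  define As where "As n = last_n_dfa a k (window_lang a L n)" for n
  have "dfa_lang (As n) = window_lang a L n" for n
    using window_lang_iff_last_n[OF assms[rule_format]]
    by (auto simp: As_def dfa_lang_last_n_dfa)
  then have "sliding_window_alg a L As"
    by (simp add: sliding_window_alg_def As_def wf_last_n_dfa)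
  moreover have "\<forall>n. space_le (As n) (Max (to_nat ` {w :: 'a list. length w = k}))"
    by (simp add: As_def space_le_last_n_dfa)
  ultimately show ?thesis
    unfolding F_O1_def by blast
qed

theorem corollary6p4:
  fixes a :: "'a::finite" and L :: "'a list set"
  shows "F_O1 a L \<longleftrightarrow> (\<exists>k. \<forall>n. suffix_testable k (window_lang a L n))"
proof
  show "F_O1 a L \<Longrightarrow> \<exists>k. \<forall>n. suffix_testable k (window_lang a L n)"
    by (rule suffix_testable_if_F_O1)
  show "\<exists>k. \<forall>n. suffix_testable k (window_lang a L n) \<Longrightarrow> F_O1 a L"
    using F_O1_if_suffix_testable by blast
qed

end
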